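(* Let $SG=(G,\sigma)$ be an unbalanced signed graph and let $n_b$ be the minimum number of edges of a negative circuit of $SG$. Then for every $i\le n_b-2$, $$H^i(SG)\cong H^i(G)\cong H^i_b(SG)$$ as graded abelian groups.
   Context: Signed graphs: $SG=(G,\sigma)$, $G$ finite (loops, multiple edges allowed), $\sigma:E(G)\to\{\pm1\}$. A circuit (a loop counts as a circuit with one edge) is negative if the product of its edge signs is $-1$; balanced = no negative circuit. $[G:s]$, $[SG:s]$: spanning subgraph with edge set $s$. Complexes: Fix a total order on $E(G)$. An enhanced state of $G$ is $S=(s,c)$, $c$ labels each component of $[G:s]$ by $1$ or $x$; $j(S)$ = number of $x$-labels (grading). With $m(1,1)=1$, $m(1,x)=m(x,1)=x$, $m(x,x)=0$: for $e\notin s$, $S_e=(s\cup\{e\},c_e)$ where a component containing both ends of $e$ keeps its label and if $e$ joins components $E_i,E_j$ the merged one gets $m(c(E_i),c(E_j))$ ($S_e=0$ if both are $x$). $d(S)=\sum_{e\notin s}(-1)^{n(e)}S_e$, $n(e)$ = number of edges of $s$ preceding $e$. $H^i(G)$: cohomology of $(C^\bullet(G),d)$, $C^i(G)$ free on all enhanced states with $|s|=i$ (chromatic cohomology of the unsigned graph). $H^i(SG)$: cohomology of $C^\bullet(SG)$, free on enhanced states whose $c$ assigns $1$ to every unbalanced component of $[SG:s]$, with $d_s=f\circ d$ where $f$ projects onto these states. $H^i_b(SG)$: cohomology of $C^\bullet_b(SG)$, free on enhanced states with $[SG:s]$ balanced, with $d_b=f_b\circ d$, $f_b$ the analogous projection.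 *)

theory Defs
  imports "HOL-Algebra.Algebra"
begin

(* A finite graph (loops and multiple edges allowed): vertex set V, edge set E,
   inc e = the (unordered) pair of end vertices of e.
   The total order on edges is the linorder on the edge type. *)

type_synonym ('e,'v) state = "'e set \<times> ('v set \<Rightarrow> bool)"
  (* (s, c): c K = True means component K is labelled x, False means labelled 1 *)

definition adj :: "('e \<Rightarrow> 'v \<times> 'v) \<Rightarrow> 'e set \<Rightarrow> 'v \<Rightarrow> 'v \<Rightarrow> bool" where
  "adj inc s x y \<longleftrightarrow> (\<exists>e\<in>s. inc e = (x, y) \<or> inc e = (y, x))"

definition conn :: "('e \<Rightarrow> 'v \<times> 'v) \<Rightarrow> 'e set \<Rightarrow> 'v \<Rightarrow> 'v \<Rightarrow> bool" where
  "conn inc s = (adj inc s)\<^sup>*\<^sup>*"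

definition comps :: "'v set \<Rightarrow> ('e \<Rightarrow> 'v \<times> 'v) \<Rightarrow> 'e set \<Rightarrow> 'v set set" where
  "comps V inc s = {{v \<in> V. conn inc s u v} | u. u \<in> V}"

(* degree in the subgraph with edge set C (a loop contributes 2) *)
definition deg :: "('e \<Rightarrow> 'v \<times> 'v) \<Rightarrow> 'e set \<Rightarrow> 'v \<Rightarrow> nat" where
  "deg inc C v = card {e \<in> C. fst (inc e) = v} + card {e \<in> C. snd (inc e) = v}"

definition circuit :: "'e set \<Rightarrow> ('e \<Rightarrow> 'v \<times> 'v) \<Rightarrow> 'e set \<Rightarrow> bool" where
  "circuit E inc C \<longleftrightarrow> C \<subseteq> E \<and> C \<noteq> {} \<and>
     (\<forall>v. deg inc C v = 0 \<or> deg inc C v = 2) \<and>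
     (\<forall>u v. deg inc C u \<noteq> 0 \<longrightarrow> deg inc C v \<noteq> 0 \<longrightarrow> conn inc C u v)"

definition negative_circuit :: "'e set \<Rightarrow> ('e \<Rightarrow> 'v \<times> 'v) \<Rightarrow> ('e \<Rightarrow> int) \<Rightarrow> 'e set \<Rightarrow> bool" where
  "negative_circuit E inc sigma C \<longleftrightarrow> circuit E inc C \<and> prod sigma C = -1"

definition balanced :: "'e set \<Rightarrow> ('e \<Rightarrow> 'v \<times> 'v) \<Rightarrow> ('e \<Rightarrow> int) \<Rightarrow> bool" where
  "balanced s inc sigma \<longleftrightarrow> \<not> (\<exists>C. negative_circuit s inc sigma C)"

definition unbalanced_comp :: "('e \<Rightarrow> 'v \<times> 'v) \<Rightarrow> ('e \<Rightarrow> int) \<Rightarrow> 'e set \<Rightarrow> 'v set \<Rightarrow> bool" where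
  "unbalanced_comp inc sigma s K \<longleftrightarrow>
     (\<exists>C. negative_circuit s inc sigma C \<and> (\<forall>e\<in>C. fst (inc e) \<in> K \<and> snd (inc e) \<in> K))"

(* all enhanced states of G (labels are only on components; False elsewhere) *)
definition enh_states :: "'v set \<Rightarrow> 'e set \<Rightarrow> ('e \<Rightarrow> 'v \<times> 'v) \<Rightarrow> ('e,'v) state set" where
  "enh_states V E inc = {(s, c). s \<subseteq> E \<and> (\<forall>K. K \<notin> comps V inc s \<longrightarrow> \<not> c K)}"

definition jdeg :: "'v set \<Rightarrow> ('e \<Rightarrow> 'v \<times> 'v) \<Rightarrow> ('e,'v) state \<Rightarrow> nat" where
  "jdeg V inc S = card {K \<in> comps V inc (fst S). snd S K}"

(* S_e = 0: e joins two distinct components both labelled x *)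
definition step_zero :: "'v set \<Rightarrow> ('e \<Rightarrow> 'v \<times> 'v) \<Rightarrow> 'e set \<Rightarrow> ('v set \<Rightarrow> bool) \<Rightarrow> 'e \<Rightarrow> bool" where
  "step_zero V inc s c e \<longleftrightarrow>
     (\<exists>K1\<in>comps V inc s. \<exists>K2\<in>comps V inc s. K1 \<noteq> K2 \<and> c K1 \<and> c K2 \<and>
        (\<exists>K'\<in>comps V inc (insert e s). K1 \<subseteq> K' \<and> K2 \<subseteq> K'))"

(* labelling c_e of S_e (when nonzero): a new component gets the product m of the
   labels of the old components it contains, i.e. x iff one of them is x *)
definition step_label :: "'v set \<Rightarrow> ('e \<Rightarrow> 'v \<times> 'v) \<Rightarrow> 'e set \<Rightarrow> ('v set \<Rightarrow> bool) \<Rightarrow> 'e \<Rightarrow> ('v set \<Rightarrow> bool)" where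
  "step_label V inc s c e =
     (\<lambda>K'. K' \<in> comps V inc (insert e s) \<and> (\<exists>K\<in>comps V inc s. K \<subseteq> K' \<and> c K))"

definition dcoef :: "'v set \<Rightarrow> 'e::linorder set \<Rightarrow> ('e \<Rightarrow> 'v \<times> 'v) \<Rightarrow> ('e,'v) state \<Rightarrow> ('e,'v) state \<Rightarrow> int" where
  "dcoef V E inc S T =
     (\<Sum>e\<in>E - fst S. if fst T = insert e (fst S) \<and> \<not> step_zero V inc (fst S) (snd S) e
                          \<and> snd T = step_label V inc (fst S) (snd S) e
                       then (-1) ^ card {e' \<in> fst S. e' < e} else 0)"

(* free abelian group on a (finite) basis B of states: integer functions supported on B *)
definition cochain_grp :: "('e,'v) state set \<Rightarrow> (('e,'v) state \<Rightarrow> int) monoid" where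
  "cochain_grp B = \<lparr>carrier = {\<phi>. \<forall>x. x \<notin> B \<longrightarrow> \<phi> x = 0},
                    monoid.mult = (\<lambda>\<phi> \<psi> x. \<phi> x + \<psi> x), one = (\<lambda>x. 0)\<rparr>"

(* (projected) differential from the span of B to the span of B', i.e. f o d *)
definition dmap :: "'v set \<Rightarrow> 'e::linorder set \<Rightarrow> ('e \<Rightarrow> 'v \<times> 'v) \<Rightarrow> ('e,'v) state set \<Rightarrow> ('e,'v) state set
                     \<Rightarrow> (('e,'v) state \<Rightarrow> int) \<Rightarrow> (('e,'v) state \<Rightarrow> int)" where
  "dmap V E inc B B' \<phi> = (\<lambda>T. if T \<in> B' then (\<Sum>S\<in>B. dcoef V E inc S T * \<phi> S) else 0)"

definition basis :: "'v set \<Rightarrow> ('e \<Rightarrow> 'v \<times> 'v) \<Rightarrow> ('e,'v) state set \<Rightarrow> nat \<Rightarrow> nat \<Rightarrow> ('e,'v) state set" where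
  "basis V inc A i j = {S \<in> A. card (fst S) = i \<and> jdeg V inc S = j}"

definition cohom :: "'v set \<Rightarrow> 'e::linorder set \<Rightarrow> ('e \<Rightarrow> 'v \<times> 'v) \<Rightarrow> ('e,'v) state set \<Rightarrow> nat \<Rightarrow> nat
                      \<Rightarrow> (('e,'v) state \<Rightarrow> int) set monoid" where
  "cohom V E inc A i j =
     (let C = cochain_grp (basis V inc A i j);
          Z = {\<phi> \<in> carrier C. dmap V E inc (basis V inc A i j) (basis V inc A (Suc i) j) \<phi> = (\<lambda>x. 0)};
          Bd = (if i = 0 then {\<lambda>x. 0}
                else dmap V E inc (basis V inc A (i - 1) j) (basis V inc A i j)
                       ` carrier (cochain_grp (basis V inc A (i - 1) j)))
      in (C\<lparr>carrier := Z\<rparr>) Mod Bd)"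

definition H_G where
  "H_G V E inc i j = cohom V E inc (enh_states V E inc) i j"

definition H_SG where
  "H_SG V E inc sigma i j = cohom V E inc
     {S \<in> enh_states V E inc. \<forall>K\<in>comps V inc (fst S). unbalanced_comp inc sigma (fst S) K \<longrightarrow> \<not> snd S K} i j"

definition H_b where
  "H_b V E inc sigma i j = cohom V E inc
     {S \<in> enh_states V E inc. balanced (fst S) inc sigma} i j"

end

theory Submission
  imports Defs
begin

text \<open>A spanning subgraph with fewer than \<open>n\<^sub>b\<close> edges cannot contain a negative circuit, so
  every enhanced state of degree below \<open>n\<^sub>b\<close> lies in all three complexes. Hence the three
  cochain complexes coincide in degrees \<open>\<le> n\<^sub>b - 1\<close>, and \<open>H\<^sup>i\<close> only involves degrees
  \<open>i - 1\<close>, \<open>i\<close> and \<open>i + 1\<close>.\<close>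

lemma negative_circuit_mono:
  assumes "negative_circuit s inc sigma C" and "s \<subseteq> E"
  shows "negative_circuit E inc sigma C"
  using assms by (auto simp: negative_circuit_def circuit_def)

lemma balanced_if_card_less_Least_negative_circuit:
  assumes "finite E" and "s \<subseteq> E"
    and "card s < (LEAST n. \<exists>C. negative_circuit E inc sigma C \<and> card C = n)"
  shows "balanced s inc sigma"
  unfolding balanced_def
proof
  assume "\<exists>C. negative_circuit s inc sigma C"
  then obtain C where C: "negative_circuit s inc sigma C" by blast
  then have "C \<subseteq> s" by (simp add: negative_circuit_def circuit_def)
  then have "card C \<le> card s"
    using assms(1,2) by (meson card_mono finite_subset)
  moreover have "(LEAST n. \<exists>C. negative_circuit E inc sigma C \<and> card C = n) \<le> card C"
    using negative_circuit_mono[OF C assms(2)] by (auto intro: Least_le)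
  ultimately show False using assms(3) by simp
qed

lemma not_unbalanced_comp_if_balanced:
  "balanced s inc sigma \<Longrightarrow> \<not> unbalanced_comp inc sigma s K"
  by (auto simp: balanced_def unbalanced_comp_def)

lemma basis_restrict:
  assumes "\<And>S. S \<in> A \<Longrightarrow> card (fst S) = k \<Longrightarrow> P S"
  shows "basis V inc {S \<in> A. P S} k j = basis V inc A k j"
  using assms by (auto simp: basis_def)

lemma cohom_cong:
  assumes "\<And>k. k \<le> Suc i \<Longrightarrow> basis V inc A k j = basis V inc A' k j"
  shows "cohom V E inc A i j = cohom V E inc A' i j"
proof -
  have "basis V inc A (i - 1) j = basis V inc A' (i - 1) j"
    and "basis V inc A i j = basis V inc A' i j"
    and "basis V inc A (Suc i) j = basis V inc A' (Suc i) j"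
    using assms by auto
  then show ?thesis unfolding cohom_def by simp
qed

theorem proposition5p1:
  fixes V :: "'v set" and E :: "'e::linorder set" and inc :: "'e \<Rightarrow> 'v \<times> 'v"
    and sigma :: "'e \<Rightarrow> int" and nb i :: nat
  assumes "finite V" and "finite E"
    and "\<forall>e\<in>E. fst (inc e) \<in> V \<and> snd (inc e) \<in> V"
    and "\<forall>e\<in>E. sigma e = 1 \<or> sigma e = -1"
    and "\<not> balanced E inc sigma"
    and "nb = (LEAST n. \<exists>C. negative_circuit E inc sigma C \<and> card C = n)"
    and "int i \<le> int nb - 2"
  shows "\<forall>j. H_SG V E inc sigma i j \<cong> H_G V E inc i j \<and> H_G V E inc i j \<cong> H_b V E inc sigma i j"
proof
  fix j
  let ?A = "enh_states V E inc"
  have low_balanced: "balanced (fst S) inc sigma"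
    if "S \<in> ?A" and "card (fst S) \<le> Suc i" for S
  proof (rule balanced_if_card_less_Least_negative_circuit[OF assms(2)])
    show "fst S \<subseteq> E" using that(1) by (auto simp: enh_states_def)
    show "card (fst S) < (LEAST n. \<exists>C. negative_circuit E inc sigma C \<and> card C = n)"
      using that(2) assms(6,7) by simp
  qed
  have "H_SG V E inc sigma i j = H_G V E inc i j"
    unfolding H_SG_def H_G_def
    by (intro cohom_cong basis_restrict) (auto dest: low_balanced not_unbalanced_comp_if_balanced)
  moreover have "H_b V E inc sigma i j = H_G V E inc i j"
    unfolding H_b_def H_G_def
    by (intro cohom_cong basis_restrict) (auto dest: low_balanced)
  ultimately show "H_SG V E inc sigma i j \<cong> H_G V E inc i j \<and> H_G V E inc i j \<cong> H_b V E inc sigma i j"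
    by simp
qed

end
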